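(* Consider Algorithm SAVIC (described in the context) run with heterogeneous data. Suppose each $f_m$ is $\mu$-strongly convex ($\mu\ge0$) and $L$-smooth, and there are constants $0<\alpha\le\Gamma$ with $\alpha I\preceq D^0\preceq\Gamma I$ and $\alpha I\preceq H^t\preceq\Gamma I$ for all $t$. Then for any $t$ with $t_p\le t<t_{p+1}$, $$-\frac2M\sum_{m=1}^M\langle\hat x_t-x_*,\nabla f_m(x_t^m)\rangle\le-2D_f(\hat x_t,x_* )-\frac{\mu}{\Gamma}\|\hat x_t-x_*\|^2_{\hat D^{t_p}}+\frac{L}{\alpha}V_t.$$
   Context: Problem: minimize $f(x)=\frac1M\sum_mf_m(x)$ over $\mathbb R^d$, $f_m(x)=\mathbb E_{z\sim\mathcal D_m}[f_m(x,z)]$, $x_*$ the solution; $\mu$-strong convexity and $L$-smoothness: $\frac{\mu}{2}\|x-y\|^2\le f_m(x)-f_m(y)-\langle\nabla f_m(y),x-y\rangle\le\frac{L}{2}\|x-y\|^2$. $D_f(x,y)=f(x)-f(y)-\langle\nabla f(y),x-y\rangle$. $\|x\|_A^2=\langle x,Ax\rangle$. Preconditioner: diagonal $D^t$ from diagonal $D^0,H^t$ via $(D^t)^2=\beta_t(D^{t-1})^2+(1-\beta_t)(H^t)^2$ or $D^t=\beta_tD^{t-1}+(1-\beta_t)H^t$, $\beta_t\in[0,1]$; $(\hat D^t)_{ii}=\max\{\alpha,|D^t_{ii}|\}$. Algorithm SAVIC: stepsize $\gamma>0$, $x_0^m=x_0$, synchronization times $t_0=0<t_1<\dots$; at $t=t_p$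 the matrix $\hat D^{t_p}$ is updated and used by all clients for $t_p\le t<t_{p+1}$; client $m$ samples $z_m\sim\mathcal D_m$ i.i.d. and sets $x_{t+1}^m=\frac1M\sum_j(x_t^j-\gamma(\hat D^{t_p})^{-1}\nabla f_j(x_t^j,z_j))$ if $t=t_p$ for some $p$, else $x_{t+1}^m=x_t^m-\gamma(\hat D^{t_p})^{-1}\nabla f_m(x_t^m,z_m)$. Notation: $\hat x_t=\frac1M\sum_mx_t^m$; $V_t=\frac1M\sum_m\|x_t^m-\hat x_t\|^2_{\hat D^{t_p}}$ for $t_p\le t<t_{p+1}$. *)

theory Defs
  imports "HOL-Analysis.Analysis"
begin

text \<open>Diagonal matrices on R^d are represented by their diagonal, a vector of type real^'n.\<close>

definition wnorm2 :: "real^'n \<Rightarrow> real^'n \<Rightarrow> real" where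
  "wnorm2 A v = (\<Sum>i\<in>UNIV. A$i * (v$i)^2)"

text \<open>Preconditioner D^t (sq = True: squared averaging rule; False: linear rule).\<close>
primrec precD :: "bool \<Rightarrow> (nat \<Rightarrow> real) \<Rightarrow> real^'n \<Rightarrow> (nat \<Rightarrow> real^'n) \<Rightarrow> nat \<Rightarrow> real^'n" where
  "precD sq beta D0 H 0 = D0"
| "precD sq beta D0 H (Suc t) =
     (if sq then (\<chi> i. sqrt (beta (Suc t) * (precD sq beta D0 H t $ i)^2
                              + (1 - beta (Suc t)) * (H (Suc t) $ i)^2))
      else beta (Suc t) *\<^sub>R precD sq beta D0 H t + (1 - beta (Suc t)) *\<^sub>R H (Suc t))"

definition precDhat :: "real \<Rightarrow> bool \<Rightarrow> (nat \<Rightarrow> real) \<Rightarrow> real^'n \<Rightarrow> (nat \<Rightarrow> real^'n) \<Rightarrow> nat \<Rightarrow> real^'n" where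
  "precDhat \<alpha> sq beta D0 H t = (\<chi> i. max \<alpha> \<bar>precD sq beta D0 H t $ i\<bar>)"

definition period :: "(nat \<Rightarrow> nat) \<Rightarrow> nat \<Rightarrow> nat" where
  "period tp t = (GREATEST p. tp p \<le> t)"

text \<open>SAVIC iterates x_t^m (clients m < M). G m x z is the stochastic gradient
  \<nabla> f_m(x,z); zs t m is the sample drawn by client m at step t.\<close>
primrec savic_x :: "nat \<Rightarrow> real \<Rightarrow> (nat \<Rightarrow> nat) \<Rightarrow> (nat \<Rightarrow> real^'n)
    \<Rightarrow> (nat \<Rightarrow> real^'n \<Rightarrow> 'z \<Rightarrow> real^'n) \<Rightarrow> (nat \<Rightarrow> nat \<Rightarrow> 'z) \<Rightarrow> real^'n
    \<Rightarrow> nat \<Rightarrow> nat \<Rightarrow> real^'n" where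
  "savic_x M \<gamma> tp Dh G zs x0 0 m = x0"
| "savic_x M \<gamma> tp Dh G zs x0 (Suc t) m =
     (let P = Dh (tp (period tp t));
          step = (\<lambda>j. savic_x M \<gamma> tp Dh G zs x0 t j
                  - (\<chi> i. \<gamma> / (P $ i) * (G j (savic_x M \<gamma> tp Dh G zs x0 t j) (zs t j) $ i)))
      in if t \<in> range tp then (1 / real M) *\<^sub>R (\<Sum>j<M. step j) else step m)"

end

theory Submission
  imports Defs
begin

text \<open>Only two facts about the SAVIC run enter: the preconditioner stays in \<open>[\<alpha>, \<Gamma>]\<close>
  (averaging and clipping preserve these bounds), and the gradients average to zero
  at the minimiser. Everything else holds for arbitrary client points \<open>y\<^sub>m\<close> with mean
  \<open>x\<^sub>h\<close>. Adding the strong convexity inequality at \<open>(x\<^sub>*, y\<^sub>m)\<close> to the smoothness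
  inequality at \<open>(x\<^sub>h, y\<^sub>m)\<close> bounds \<open>-\<langle>x\<^sub>h - x\<^sub>*, \<nabla>f\<^sub>m(y\<^sub>m)\<rangle>\<close>; averaging over \<open>m\<close> and
  Jensen's inequality \<open>\<parallel>x\<^sub>h - x\<^sub>*\<parallel>\<^sup>2 \<le> (1/M) \<Sum>\<^sub>m \<parallel>y\<^sub>m - x\<^sub>*\<parallel>\<^sup>2\<close> give the claim in the
  Euclidean norm, and \<open>\<alpha> I \<preceq> \<hat>D \<preceq> \<Gamma> I\<close> converts it to the weighted norms.\<close>

lemma wnorm2_mono:
  assumes "\<And>i. A $ i \<le> B $ i"
  shows "wnorm2 A v \<le> wnorm2 B v"
  unfolding wnorm2_def by (intro sum_mono mult_right_mono assms) simp

lemma wnorm2_const: "wnorm2 (\<chi> i. a) v = a * (norm v)\<^sup>2"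
  unfolding wnorm2_def power2_norm_eq_inner inner_vec_def
  by (simp add: sum_distrib_left power2_eq_square)

lemma wnorm2_ge:
  assumes "\<And>i. a \<le> P $ i"
  shows "a * (norm v)\<^sup>2 \<le> wnorm2 P v"
  using wnorm2_mono[of "\<chi> i. a" P v] assms by (simp add: wnorm2_const)

lemma wnorm2_le:
  assumes "\<And>i. P $ i \<le> a"
  shows "wnorm2 P v \<le> a * (norm v)\<^sup>2"
  using wnorm2_mono[of P "\<chi> i. a" v] assms by (simp add: wnorm2_const)

lemma convex_comb_in_interval:
  fixes a b u v c :: real
  assumes "a \<le> u" "u \<le> b" "a \<le> v" "v \<le> b" "0 \<le> c" "c \<le> 1"
  shows "a \<le> c * u + (1 - c) * v \<and> c * u + (1 - c) * v \<le> b"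
proof -
  have "c * a \<le> c * u" "(1 - c) * a \<le> (1 - c) * v" "c * u \<le> c * b" "(1 - c) * v \<le> (1 - c) * b"
    using assms by (auto intro: mult_left_mono)
  then show ?thesis by (simp add: algebra_simps)
qed

lemma precD_bounded:
  assumes "0 \<le> a"
    and D0: "\<And>i. a \<le> D0 $ i \<and> D0 $ i \<le> b"
    and H: "\<And>s i. a \<le> H s $ i \<and> H s $ i \<le> b"
    and beta: "\<And>s. 0 \<le> beta s \<and> beta s \<le> 1"
  shows "a \<le> precD sq beta D0 H t $ i \<and> precD sq beta D0 H t $ i \<le> b"
proof (induction t arbitrary: i)
  case 0
  then show ?case using D0 by simp
next
  case (Suc t)
  define u where "u = precD sq beta D0 H t $ i"
  define v where "v = H (Suc t) $ i"
  define c where "c = beta (Suc t)"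
  have u: "a \<le> u" "u \<le> b" and v: "a \<le> v" "v \<le> b" and c: "0 \<le> c" "c \<le> 1"
    using Suc H beta unfolding u_def v_def c_def by auto
  show ?case
  proof (cases sq)
    case True
    have "a\<^sup>2 \<le> u\<^sup>2" "u\<^sup>2 \<le> b\<^sup>2" "a\<^sup>2 \<le> v\<^sup>2" "v\<^sup>2 \<le> b\<^sup>2"
      using u v \<open>0 \<le> a\<close> by (auto intro: power_mono)
    then have "a\<^sup>2 \<le> c * u\<^sup>2 + (1 - c) * v\<^sup>2 \<and> c * u\<^sup>2 + (1 - c) * v\<^sup>2 \<le> b\<^sup>2"
      using c by (intro convex_comb_in_interval)
    then have "a \<le> sqrt (c * u\<^sup>2 + (1 - c) * v\<^sup>2) \<and> sqrt (c * u\<^sup>2 + (1 - c) * v\<^sup>2) \<le> b"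
      using \<open>0 \<le> a\<close> u by (metis order.trans real_le_lsqrt real_le_rsqrt)
    then show ?thesis using True by (simp add: u_def v_def c_def)
  next
    case False
    then show ?thesis
      using convex_comb_in_interval[OF u v c] by (simp add: u_def v_def c_def)
  qed
qed

lemma precDhat_bounded:
  assumes "0 \<le> \<alpha>"
    and "\<And>i. \<alpha> \<le> D0 $ i \<and> D0 $ i \<le> \<Gamma>"
    and "\<And>s i. \<alpha> \<le> H s $ i \<and> H s $ i \<le> \<Gamma>"
    and "\<And>s. 0 \<le> beta s \<and> beta s \<le> 1"
  shows "\<alpha> \<le> precDhat \<alpha> sq beta D0 H t $ i \<and> precDhat \<alpha> sq beta D0 H t $ i \<le> \<Gamma>"
proof -
  have "\<alpha> \<le> precD sq beta D0 H t $ i \<and> precD sq beta D0 H t $ i \<le> \<Gamma>"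
    by (rule precD_bounded) (use assms in auto)
  with assms(1) show ?thesis by (simp add: precDhat_def)
qed

lemma strong_convexity_le_smoothness:
  fixes f :: "'a::euclidean_space \<Rightarrow> real"
  assumes "\<And>x y. \<mu> / 2 * (norm (x - y))\<^sup>2 \<le> f x - f y - g y \<bullet> (x - y)"
    and "\<And>x y. f x - f y - g y \<bullet> (x - y) \<le> L / 2 * (norm (x - y))\<^sup>2"
  shows "\<mu> \<le> L"
proof -
  obtain b :: 'a where "b \<in> Basis" using nonempty_Basis by blast
  then have "norm b = 1" by simp
  then show ?thesis using assms[of b 0] by simp
qed

lemma has_derivative_mean:
  assumes "\<And>m. m < M \<Longrightarrow> (f m has_derivative (\<lambda>h. g m \<bullet> h)) (at x)"
  shows "((\<lambda>x. (1 / real M) * (\<Sum>m<M. f m x))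
           has_derivative (\<lambda>h. ((1 / real M) *\<^sub>R (\<Sum>m<M. g m)) \<bullet> h)) (at x)"
proof -
  have "((\<lambda>x. (1 / real M) * (\<Sum>m<M. f m x))
          has_derivative (\<lambda>h. (1 / real M) * (\<Sum>m<M. g m \<bullet> h))) (at x)"
    using assms by (intro has_derivative_mult_right has_derivative_sum) auto
  then show ?thesis by (simp add: inner_sum_left)
qed

lemma gradient_eq_0_at_minimum:
  assumes "(F has_derivative (\<lambda>h. g \<bullet> h)) (at x)" and "\<And>y. F x \<le> F y"
  shows "g = 0"
proof -
  have "(\<lambda>h. g \<bullet> h) = (\<lambda>h. 0)"
    using has_derivative_local_min[OF assms(1)] assms(2) by simp
  then have "g \<bullet> g = 0" by metis
  then show ?thesis by simp
qed

lemma power2_norm_sum_le: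
  fixes y :: "'i \<Rightarrow> 'a::real_normed_vector"
  shows "(norm (\<Sum>i\<in>I. y i))\<^sup>2 \<le> card I * (\<Sum>i\<in>I. (norm (y i))\<^sup>2)"
proof -
  have "(norm (\<Sum>i\<in>I. y i))\<^sup>2 \<le> (\<Sum>i\<in>I. norm (y i))\<^sup>2"
    by (intro power_mono norm_sum) simp
  also have "\<dots> \<le> card I * (\<Sum>i\<in>I. (norm (y i))\<^sup>2)"
    using sum_squared_le_sum_of_squares[of "\<lambda>i. norm (y i)" I] by (simp add: mult.commute)
  finally show ?thesis .
qed

lemma power2_norm_mean_le:
  fixes y :: "nat \<Rightarrow> 'a::real_normed_vector"
  assumes "M > 0"
  shows "real M * (norm ((1 / real M) *\<^sub>R (\<Sum>m<M. y m) - c))\<^sup>2 \<le> (\<Sum>m<M. (norm (y m - c))\<^sup>2)"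
proof -
  have "(1 / real M) *\<^sub>R (\<Sum>m<M. y m) - c = (1 / real M) *\<^sub>R (\<Sum>m<M. y m - c)"
    using assms by (simp add: sum_subtractf scaleR_diff_right sum_constant_scaleR del: sum_constant)
  then have "real M * (norm ((1 / real M) *\<^sub>R (\<Sum>m<M. y m) - c))\<^sup>2
               = (norm (\<Sum>m<M. y m - c))\<^sup>2 / real M"
    by (simp add: power2_eq_square)
  also have "\<dots> \<le> (\<Sum>m<M. (norm (y m - c))\<^sup>2)"
    using power2_norm_sum_le[of "\<lambda>m. y m - c" "{..<M}"] assms by (simp add: field_simps)
  finally show ?thesis .
qed

lemma three_point_inequality:
  fixes g :: "'a::real_inner"
  assumes "\<mu> / 2 * (norm (x - y))\<^sup>2 \<le> f x - f y - g \<bullet> (x - y)"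
    and "f z - f y - g \<bullet> (z - y) \<le> L / 2 * (norm (z - y))\<^sup>2"
  shows "- ((z - x) \<bullet> g) \<le> f x - f z + L / 2 * (norm (z - y))\<^sup>2 - \<mu> / 2 * (norm (x - y))\<^sup>2"
proof -
  have "(z - x) \<bullet> g = g \<bullet> (z - y) - g \<bullet> (x - y)"
    by (simp add: inner_diff_left inner_diff_right inner_commute)
  with assms show ?thesis by simp
qed

lemma mean_inner_grad_le:
  fixes y :: "nat \<Rightarrow> 'a::real_inner" and f :: "nat \<Rightarrow> 'a \<Rightarrow> real"
  assumes "M > 0" and "0 \<le> \<mu>"
    and sconv: "\<And>m x y. m < M \<Longrightarrow>
        \<mu> / 2 * (norm (x - y))\<^sup>2 \<le> f m x - f m y - gf m y \<bullet> (x - y)"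
    and smooth: "\<And>m x y. m < M \<Longrightarrow>
        f m x - f m y - gf m y \<bullet> (x - y) \<le> L / 2 * (norm (x - y))\<^sup>2"
  defines "xh \<equiv> (1 / real M) *\<^sub>R (\<Sum>m<M. y m)"
  shows "- (2 / real M) * (\<Sum>m<M. (xh - xs) \<bullet> gf m (y m))
         \<le> (2 / real M) * (\<Sum>m<M. f m xs - f m xh)
            + L / real M * (\<Sum>m<M. (norm (y m - xh))\<^sup>2) - \<mu> * (norm (xh - xs))\<^sup>2"
proof -
  have "- (\<Sum>m<M. (xh - xs) \<bullet> gf m (y m))
        \<le> (\<Sum>m<M. f m xs - f m xh + L / 2 * (norm (xh - y m))\<^sup>2 - \<mu> / 2 * (norm (xs - y m))\<^sup>2)"
    unfolding sum_negf[symmetric]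
    by (intro sum_mono three_point_inequality sconv smooth) simp_all
  also have "\<dots> = (\<Sum>m<M. f m xs - f m xh) + L / 2 * (\<Sum>m<M. (norm (y m - xh))\<^sup>2)
                   - \<mu> / 2 * (\<Sum>m<M. (norm (y m - xs))\<^sup>2)"
    by (simp add: sum.distrib sum_subtractf sum_distrib_left norm_minus_commute)
  also have "\<dots> \<le> (\<Sum>m<M. f m xs - f m xh) + L / 2 * (\<Sum>m<M. (norm (y m - xh))\<^sup>2)
                   - \<mu> / 2 * (real M * (norm (xh - xs))\<^sup>2)"
    using power2_norm_mean_le[OF \<open>M > 0\<close>, of y xs] \<open>0 \<le> \<mu>\<close>
    unfolding xh_def by (simp add: mult_left_mono)
  finally show ?thesis
    using \<open>M > 0\<close> by (simp add: field_simps)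
qed

lemma mean_inner_grad_le_wnorm2:
  fixes y :: "nat \<Rightarrow> real^'n" and f :: "nat \<Rightarrow> real^'n \<Rightarrow> real"
  assumes "M > 0" and "0 \<le> \<mu>" and "0 \<le> L" and "0 < \<alpha>"
    and sconv: "\<And>m x y. m < M \<Longrightarrow>
        \<mu> / 2 * (norm (x - y))\<^sup>2 \<le> f m x - f m y - gf m y \<bullet> (x - y)"
    and smooth: "\<And>m x y. m < M \<Longrightarrow>
        f m x - f m y - gf m y \<bullet> (x - y) \<le> L / 2 * (norm (x - y))\<^sup>2"
    and P: "\<And>i. \<alpha> \<le> P $ i \<and> P $ i \<le> \<Gamma>"
  defines "xh \<equiv> (1 / real M) *\<^sub>R (\<Sum>m<M. y m)"
  shows "- (2 / real M) * (\<Sum>m<M. (xh - xs) \<bullet> gf m (y m))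
         \<le> (2 / real M) * (\<Sum>m<M. f m xs - f m xh)
            - \<mu> / \<Gamma> * wnorm2 P (xh - xs) + L / \<alpha> * ((1 / real M) * (\<Sum>m<M. wnorm2 P (y m - xh)))"
proof -
  have "\<alpha> * (\<Sum>m<M. (norm (y m - xh))\<^sup>2) \<le> (\<Sum>m<M. wnorm2 P (y m - xh))"
    unfolding sum_distrib_left using P by (intro sum_mono wnorm2_ge) auto
  then have "L * (\<Sum>m<M. (norm (y m - xh))\<^sup>2) \<le> L / \<alpha> * (\<Sum>m<M. wnorm2 P (y m - xh))"
    using \<open>0 \<le> L\<close> \<open>0 < \<alpha>\<close> by (simp add: field_simps mult_left_mono)
  then have "L * (\<Sum>m<M. (norm (y m - xh))\<^sup>2) / real M
             \<le> L / \<alpha> * (\<Sum>m<M. wnorm2 P (y m - xh)) / real M"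
    by (rule divide_right_mono) simp
  then have dispersion: "L / real M * (\<Sum>m<M. (norm (y m - xh))\<^sup>2)
                    \<le> L / \<alpha> * ((1 / real M) * (\<Sum>m<M. wnorm2 P (y m - xh)))"
    by simp
  have "\<Gamma> > 0" using P[of undefined] \<open>0 < \<alpha>\<close> by linarith
  moreover have "\<mu> * wnorm2 P (xh - xs) \<le> \<mu> * (\<Gamma> * (norm (xh - xs))\<^sup>2)"
    using wnorm2_le[of P \<Gamma> "xh - xs"] P \<open>0 \<le> \<mu>\<close> by (simp add: mult_left_mono)
  ultimately have distance: "\<mu> / \<Gamma> * wnorm2 P (xh - xs) \<le> \<mu> * (norm (xh - xs))\<^sup>2"
    by (simp add: field_simps)
  show ?thesis
    using mean_inner_grad_le[where f = f and gf = gf and y = y and xs = xs,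
                             OF \<open>M > 0\<close> \<open>0 \<le> \<mu>\<close> sconv smooth] dispersion distance
    unfolding xh_def by linarith
qed

theorem lemma6:
  fixes M :: nat and f :: "nat \<Rightarrow> real^'n \<Rightarrow> real" and gf :: "nat \<Rightarrow> real^'n \<Rightarrow> real^'n"
    and \<mu> L \<alpha> \<Gamma> \<gamma> :: real and xs x0 D0 :: "real^'n" and H :: "nat \<Rightarrow> real^'n"
    and beta :: "nat \<Rightarrow> real" and sq :: bool and tp :: "nat \<Rightarrow> nat"
    and G :: "nat \<Rightarrow> real^'n \<Rightarrow> 'z \<Rightarrow> real^'n" and zs :: "nat \<Rightarrow> nat \<Rightarrow> 'z"
    and t p :: nat
  defines "F \<equiv> (\<lambda>x. (1 / real M) * (\<Sum>m<M. f m x))"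
    and "gF \<equiv> (\<lambda>x. (1 / real M) *\<^sub>R (\<Sum>m<M. gf m x))"
    and "Dh \<equiv> precDhat \<alpha> sq beta D0 H"
    and "x \<equiv> savic_x M \<gamma> tp (precDhat \<alpha> sq beta D0 H) G zs x0"
  assumes M_pos: "M > 0"
    and grad: "\<And>m x. m < M \<Longrightarrow> (f m has_derivative (\<lambda>h. gf m x \<bullet> h)) (at x)"
    and sconv: "\<And>m x y. m < M \<Longrightarrow>
        \<mu> / 2 * (norm (x - y))^2 \<le> f m x - f m y - gf m y \<bullet> (x - y)"
    and smooth: "\<And>m x y. m < M \<Longrightarrow>
        f m x - f m y - gf m y \<bullet> (x - y) \<le> L / 2 * (norm (x - y))^2"
    and mu: "0 \<le> \<mu>"
    and alpha: "0 < \<alpha>" and alpha_Gamma: "\<alpha> \<le> \<Gamma>"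
    and D0_bd: "\<And>i. \<alpha> \<le> D0 $ i \<and> D0 $ i \<le> \<Gamma>"
    and H_bd: "\<And>s i. \<alpha> \<le> H s $ i \<and> H s $ i \<le> \<Gamma>"
    and beta_bd: "\<And>s. 0 \<le> beta s \<and> beta s \<le> 1"
    and gamma: "\<gamma> > 0"
    and xs_min: "\<And>y. F xs \<le> F y"
    and tp0: "tp 0 = 0" and tp_mono: "strict_mono tp"
    and tp_t: "tp p \<le> t" "t < tp (Suc p)"
  shows "let xh = (1 / real M) *\<^sub>R (\<Sum>m<M. x t m);
             P = Dh (tp p);
             V = (1 / real M) * (\<Sum>m<M. wnorm2 P (x t m - xh));
             DF = F xh - F xs - gF xs \<bullet> (xh - xs)
         in - (2 / real M) * (\<Sum>m<M. (xh - xs) \<bullet> gf m (x t m))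
            \<le> - 2 * DF - \<mu> / \<Gamma> * wnorm2 P (xh - xs) + L / \<alpha> * V"
proof -
  define xh where "xh = (1 / real M) *\<^sub>R (\<Sum>m<M. x t m)"
  define P where "P = Dh (tp p)"
  have P: "\<alpha> \<le> P $ i \<and> P $ i \<le> \<Gamma>" for i
    unfolding P_def Dh_def by (rule precDhat_bounded) (use alpha D0_bd H_bd beta_bd in auto)
  have "\<mu> \<le> L"
    using strong_convexity_le_smoothness[OF sconv[OF M_pos] smooth[OF M_pos]] .
  have "(F has_derivative (\<lambda>h. gF xs \<bullet> h)) (at xs)"
    unfolding F_def gF_def by (rule has_derivative_mean) (rule grad)
  then have "gF xs = 0"
    using xs_min by (rule gradient_eq_0_at_minimum)
  then have "- 2 * (F xh - F xs - gF xs \<bullet> (xh - xs)) = (2 / real M) * (\<Sum>m<M. f m xs - f m xh)"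
    unfolding F_def by (simp add: sum_subtractf right_diff_distrib)
  moreover have "- (2 / real M) * (\<Sum>m<M. (xh - xs) \<bullet> gf m (x t m))
      \<le> (2 / real M) * (\<Sum>m<M. f m xs - f m xh)
         - \<mu> / \<Gamma> * wnorm2 P (xh - xs) + L / \<alpha> * ((1 / real M) * (\<Sum>m<M. wnorm2 P (x t m - xh)))"
    unfolding xh_def using \<open>\<mu> \<le> L\<close> mu alpha
    by (intro mean_inner_grad_le_wnorm2 M_pos sconv smooth P) auto
  ultimately show ?thesis
    unfolding Let_def xh_def P_def Dh_def x_def by simp
qed

end
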